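(* Let $F$ be a field, $A\in\mathrm{Pan}(m,F)$ and $B\in\mathrm{Pan}(n,F)$. Then the Kronecker product $A\,\dot\times\, B$ lies in $\mathrm{Pan}(mn,F)$ and $\mu(A\,\dot\times\, B)=\mu(A)\mu(B)$.
   Context: $\Omega_n=\{0,\dots,n-1\}$ indexes rows and columns of $n\times n$ matrices. The $k$th upward (resp. downward) diagonal of an $n\times n$ matrix consists of positions $(i,j)$ with $i+j\equiv k$ (resp. $i-j\equiv k$) $\pmod n$. An $n\times n$ matrix over $F$ is panmagic if the sums of its entries along all rows, columns, upward diagonals and downward diagonals are equal; this common sum is its magic number $\mu$. $\mathrm{Pan}(n,F)$ denotes the set of $n\times n$ panmagic matrices over $F$. For $A=[a_{i,j}]_{i,j\in\Omega_m}$ and $B=[b_{r,s}]_{r,s\in\Omega_n}$, the Kronecker product $A\,\dot\times\,B$ is the $mn\times mn$ matrix whose $(in+r,\,jn+s)$ entry is $a_{i,j}b_{r,s}$ for $i,j\in\Omega_m$, $r,s\in\Omega_n$. *)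

theory Defs
  imports Main "HOL-Number_Theory.Cong"
begin

text \<open>An n x n matrix over 'a is represented by a function nat => nat => 'a;
  only the entries (i,j) with i,j < n (i.e. in Omega_n) matter.\<close>

definition upward_diag :: "nat \<Rightarrow> nat \<Rightarrow> (nat \<times> nat) set" where
  "upward_diag n k = {(i,j). i < n \<and> j < n \<and> [i + j = k] (mod n)}"

definition downward_diag :: "nat \<Rightarrow> nat \<Rightarrow> (nat \<times> nat) set" where
  "downward_diag n k = {(i,j). i < n \<and> j < n \<and> [int i - int j = int k] (mod int n)}"

definition has_magic_sum :: "nat \<Rightarrow> (nat \<Rightarrow> nat \<Rightarrow> 'a::field) \<Rightarrow> 'a \<Rightarrow> bool" where
  "has_magic_sum n M \<mu> \<longleftrightarrow>
     (\<forall>i<n. (\<Sum>j<n. M i j) = \<mu>) \<and>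
     (\<forall>j<n. (\<Sum>i<n. M i j) = \<mu>) \<and>
     (\<forall>k<n. (\<Sum>(i,j)\<in>upward_diag n k. M i j) = \<mu>) \<and>
     (\<forall>k<n. (\<Sum>(i,j)\<in>downward_diag n k. M i j) = \<mu>)"

definition Pan :: "nat \<Rightarrow> (nat \<Rightarrow> nat \<Rightarrow> 'a::field) set" where
  "Pan n = {M. \<exists>\<mu>. has_magic_sum n M \<mu>}"

definition magic_number :: "nat \<Rightarrow> (nat \<Rightarrow> nat \<Rightarrow> 'a::field) \<Rightarrow> 'a" where
  "magic_number n M = (\<Sum>j<n. M 0 j)"

text \<open>Kronecker product of an m x m matrix A with an n x n matrix B:
  entry (i*n+r, j*n+s) is A i j * B r s.\<close>
definition kron :: "nat \<Rightarrow> (nat \<Rightarrow> nat \<Rightarrow> 'a::field) \<Rightarrow> (nat \<Rightarrow> nat \<Rightarrow> 'a) \<Rightarrow> (nat \<Rightarrow> nat \<Rightarrow> 'a)" where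
  "kron n A B = (\<lambda>p q. A (p div n) (q div n) * B (p mod n) (q mod n))"

end

theory Submission
  imports Defs
begin

text \<open>The columns and the broken diagonals of an \<open>n \<times> n\<close> matrix are the cyclic lines
  \<open>{(i, (K + c i) mod n) | i < n}\<close> of slopes \<open>c = 0, -1, 1\<close>, so a matrix is panmagic iff
  its row sums and its line sums for these slopes and for every integer offset \<open>K\<close> agree.
  Write a row index of the Kronecker product as \<open>p = i n + r\<close>. The line of slope \<open>c\<close> and
  offset \<open>K\<close> meets row \<open>p\<close> in block column \<open>(K' + c i) mod m\<close>, where \<open>K' = (K + c r) div n\<close>
  does not depend on \<open>i\<close>, and at position \<open>(K + c r) mod n\<close> inside the block. So for fixed \<open>r\<close>
  the \<open>A\<close>-factors run over a line of \<open>A\<close> and sum to \<open>\<mu>(A)\<close>, and the \<open>B\<close>-factors that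
  remain run over a line of \<open>B\<close> of the same slope, summing to \<open>\<mu>(B)\<close>.\<close>

definition residue :: "nat \<Rightarrow> int \<Rightarrow> nat" where
  "residue n x = nat (x mod int n)"

lemma residue_less: "n > 0 \<Longrightarrow> residue n x < n"
  by (simp add: residue_def nat_less_iff)

lemma int_residue: "n > 0 \<Longrightarrow> int (residue n x) = x mod int n"
  by (simp add: residue_def)

lemma residue_of_nat: "j < n \<Longrightarrow> residue n (int j) = j"
  by (simp add: residue_def)

lemma residue_cong: "[x = y] (mod int n) \<Longrightarrow> residue n x = residue n y"
  by (simp add: residue_def cong_def)

lemma residue_add_mult: "residue n (x + y * int n) = residue n x"
  by (simp add: residue_def)

lemma residue_mult_div:
  assumes "m > 0" "n > 0"
  shows "residue (m * n) x div n = residue m (x div int n)"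
proof -
  have "x mod (int n * int m) = int n * (x div int n mod int m) + x mod int n"
    by (rule zmod_zmult2_eq) simp
  then have "x mod int (m * n) div int n = x div int n mod int m"
    using assms by (simp add: mult.commute)
  then have "int (residue (m * n) x div n) = int (residue m (x div int n))"
    using assms by (simp add: of_nat_div int_residue)
  then show ?thesis
    by (simp only: of_nat_eq_iff)
qed

lemma residue_mult_mod:
  assumes "m > 0" "n > 0"
  shows "residue (m * n) x mod n = residue n x"
proof -
  have "int (residue (m * n) x mod n) = int (residue n x)"
    using assms by (simp add: of_nat_mod int_residue mod_mod_cancel)
  then show ?thesis
    by (simp only: of_nat_eq_iff)
qed

lemma sum_lessThan_mult:
  fixes m n :: nat
  shows "(\<Sum>p<m * n. g p) = (\<Sum>i<m. \<Sum>r<n. g (i * n + r))"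
proof -
  have "(\<Sum>p<m * n. g p) = (\<Sum>i<m. sum g {i * n..<i * n + n})"
    by (simp only: sum.nat_group)
  also have "\<dots> = (\<Sum>i<m. \<Sum>r<n. g (i * n + r))"
  proof (rule sum.cong[OF refl])
    fix i
    have "sum g {0 + i * n..<n + i * n} = (\<Sum>r=0..<n. g (r + i * n))"
      by (rule sum.shift_bounds_nat_ivl)
    then show "sum g {i * n..<i * n + n} = (\<Sum>r<n. g (i * n + r))"
      by (simp add: add.commute atLeast0LessThan)
  qed
  finally show ?thesis .
qed

definition line_sum :: "nat \<Rightarrow> int \<Rightarrow> int \<Rightarrow> (nat \<Rightarrow> nat \<Rightarrow> 'a::field) \<Rightarrow> 'a" where
  "line_sum n c K M = (\<Sum>i<n. M i (residue n (K + c * int i)))"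

lemma line_sum_cong:
  assumes "[K = K'] (mod int n)"
  shows "line_sum n c K M = line_sum n c K' M"
  unfolding line_sum_def
  by (intro sum.cong refl arg_cong[where f = "M _"] residue_cong cong_add assms cong_refl)

lemma column_sum_eq_line_sum:
  "j < n \<Longrightarrow> (\<Sum>i<n. M i j) = line_sum n 0 (int j) M"
  by (simp add: line_sum_def residue_of_nat)

lemma sum_upward_diag_eq_line_sum:
  assumes "n > 0"
  shows "(\<Sum>(i, j)\<in>upward_diag n k. M i j) = line_sum n (-1) (int k) M"
proof -
  let ?f = "\<lambda>i. (i, residue n (int k - int i))"
  have "[i + j = k] (mod n) \<longleftrightarrow> j = residue n (int k - int i)" if "j < n" for i j
  proof -
    have "int i + int j - int k = int j - (int k - int i)"
      by simp
    then have "[i + j = k] (mod n) \<longleftrightarrow> [int j = int k - int i] (mod int n)"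
      by (simp only: cong_int_iff[symmetric] of_nat_add cong_iff_dvd_diff)
    also have "\<dots> \<longleftrightarrow> int j = int (residue n (int k - int i))"
      using that assms by (simp add: cong_def int_residue)
    finally show ?thesis by simp
  qed
  then have "upward_diag n k = ?f ` {..<n}"
    using residue_less[OF assms] unfolding upward_diag_def by auto
  moreover have "inj_on ?f {..<n}"
    by (auto simp: inj_on_def)
  ultimately show ?thesis
    by (simp add: sum.reindex line_sum_def)
qed

lemma sum_downward_diag_eq_line_sum:
  assumes "n > 0"
  shows "(\<Sum>(i, j)\<in>downward_diag n k. M i j) = line_sum n 1 (- int k) M"
proof -
  let ?f = "\<lambda>i. (i, residue n (- int k + int i))"
  have "[int i - int j = int k] (mod int n) \<longleftrightarrow> j = residue n (- int k + int i)" if "j < n" for i j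
  proof -
    have "int j - (- int k + int i) = - (int i - int j - int k)"
      by simp
    then have "[int i - int j = int k] (mod int n) \<longleftrightarrow> [int j = - int k + int i] (mod int n)"
      by (simp only: cong_iff_dvd_diff dvd_minus_iff)
    also have "\<dots> \<longleftrightarrow> int j = int (residue n (- int k + int i))"
      using that assms by (simp add: cong_def int_residue)
    finally show ?thesis by simp
  qed
  then have "downward_diag n k = ?f ` {..<n}"
    using residue_less[OF assms] unfolding downward_diag_def by auto
  moreover have "inj_on ?f {..<n}"
    by (auto simp: inj_on_def)
  ultimately show ?thesis
    by (simp add: sum.reindex line_sum_def)
qed

lemma has_magic_sum_iff_line_sums:
  assumes "n > 0"
  shows "has_magic_sum n M \<mu> \<longleftrightarrow>
    (\<forall>i<n. (\<Sum>j<n. M i j) = \<mu>) \<and> (\<forall>c\<in>{0, -1, 1}. \<forall>K. line_sum n c K M = \<mu>)"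
proof
  assume magic: "has_magic_sum n M \<mu>"
  have "line_sum n c K M = \<mu>" if c: "c \<in> {0, -1, 1}" for c K
  proof -
    have K: "[K = int (residue n K)] (mod int n)" "[K = - int (residue n (- K))] (mod int n)"
      using assms by (simp_all add: int_residue cong_def mod_minus_eq)
    consider "c = 0" | "c = -1" | "c = 1"
      using c by blast
    then show ?thesis
    proof cases
      case 1
      then show ?thesis using magic K(1) residue_less[OF assms]
        by (metis line_sum_cong column_sum_eq_line_sum has_magic_sum_def)
    next
      case 2
      then show ?thesis using magic K(1) residue_less[OF assms]
        by (metis line_sum_cong sum_upward_diag_eq_line_sum[OF assms] has_magic_sum_def)
    next
      case 3
      then show ?thesis using magic K(2) residue_less[OF assms]
        by (metis line_sum_cong sum_downward_diag_eq_line_sum[OF assms] has_magic_sum_def)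
    qed
  qed
  then show "(\<forall>i<n. (\<Sum>j<n. M i j) = \<mu>) \<and> (\<forall>c\<in>{0, -1, 1}. \<forall>K. line_sum n c K M = \<mu>)"
    using magic unfolding has_magic_sum_def by blast
next
  assume "(\<forall>i<n. (\<Sum>j<n. M i j) = \<mu>) \<and> (\<forall>c\<in>{0, -1, 1}. \<forall>K. line_sum n c K M = \<mu>)"
  then show "has_magic_sum n M \<mu>"
    unfolding has_magic_sum_def
    by (simp add: column_sum_eq_line_sum sum_upward_diag_eq_line_sum[OF assms]
        sum_downward_diag_eq_line_sum[OF assms])
qed

lemma kron_entry:
  "s < n \<Longrightarrow> kron n A B p (j * n + s) = A (p div n) j * B (p mod n) s"
  by (simp add: kron_def)

lemma row_sum_kron:
  fixes A B :: "nat \<Rightarrow> nat \<Rightarrow> 'a::field"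
  shows "(\<Sum>q<m * n. kron n A B p q) = (\<Sum>j<m. A (p div n) j) * (\<Sum>s<n. B (p mod n) s)"
  by (simp add: sum_lessThan_mult kron_entry sum_product)

lemma line_sum_kron:
  fixes A B :: "nat \<Rightarrow> nat \<Rightarrow> 'a::field"
  assumes m: "m > 0" and n: "n > 0"
    and A: "\<And>K. line_sum m c K A = a" and B: "\<And>K. line_sum n c K B = b"
  shows "line_sum (m * n) c K (kron n A B) = a * b"
proof -
  have entry: "kron n A B (i * n + r) (residue (m * n) (K + c * int (i * n + r)))
      = A i (residue m ((K + c * int r) div int n + c * int i)) * B r (residue n (K + c * int r))"
    if "r < n" for i r
  proof -
    have shift: "K + c * int (i * n + r) = (K + c * int r) + (c * int i) * int n"
      by (simp add: algebra_simps)
    show ?thesis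
      using that m n unfolding kron_def shift
      by (simp add: residue_mult_div residue_mult_mod residue_add_mult add.commute)
  qed
  have "line_sum (m * n) c K (kron n A B)
      = (\<Sum>i<m. \<Sum>r<n. A i (residue m ((K + c * int r) div int n + c * int i))
                         * B r (residue n (K + c * int r)))"
    unfolding line_sum_def sum_lessThan_mult using entry by simp
  also have "\<dots> = (\<Sum>r<n. line_sum m c ((K + c * int r) div int n) A * B r (residue n (K + c * int r)))"
    by (subst sum.swap) (simp add: line_sum_def sum_distrib_right)
  also have "\<dots> = a * line_sum n c K B"
    unfolding A by (simp add: line_sum_def sum_distrib_left)
  finally show ?thesis
    by (simp add: B)
qed

lemma magic_number_eq:
  "n > 0 \<Longrightarrow> has_magic_sum n M \<mu> \<Longrightarrow> magic_number n M = \<mu>"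
  by (simp add: magic_number_def has_magic_sum_def)

lemma has_magic_sum_kron:
  fixes A B :: "nat \<Rightarrow> nat \<Rightarrow> 'a::field"
  assumes m: "m > 0" and n: "n > 0"
    and A: "has_magic_sum m A a" and B: "has_magic_sum n B b"
  shows "has_magic_sum (m * n) (kron n A B) (a * b)"
proof -
  have rows: "(\<Sum>q<m * n. kron n A B p q) = a * b" if "p < m * n" for p
    using A B m n that
    by (simp add: row_sum_kron has_magic_sum_def less_mult_imp_div_less)
  have "\<forall>c\<in>{0, -1, 1}. \<forall>K. line_sum m c K A = a"
    using A has_magic_sum_iff_line_sums[OF m] by blast
  moreover have "\<forall>c\<in>{0, -1, 1}. \<forall>K. line_sum n c K B = b"
    using B has_magic_sum_iff_line_sums[OF n] by blast
  ultimately have "\<forall>c\<in>{0, -1, 1}. \<forall>K. line_sum (m * n) c K (kron n A B) = a * b"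
    using line_sum_kron[OF m n] by blast
  with rows show ?thesis
    unfolding has_magic_sum_iff_line_sums[OF mult_pos_pos[OF m n]] by blast
qed

theorem corollary3p1:
  fixes A B :: "nat \<Rightarrow> nat \<Rightarrow> 'a::field" and m n :: nat
  assumes "A \<in> Pan m" and "B \<in> Pan n"
  shows "kron n A B \<in> Pan (m * n) \<and>
         magic_number (m * n) (kron n A B) = magic_number m A * magic_number n B"
proof (cases "m = 0 \<or> n = 0")
  case True
  then show ?thesis
    by (auto simp: Pan_def has_magic_sum_def magic_number_def)
next
  case False
  then have m: "m > 0" and n: "n > 0" by auto
  obtain a b where A: "has_magic_sum m A a" and B: "has_magic_sum n B b"
    using assms by (auto simp: Pan_def)
  have AB: "has_magic_sum (m * n) (kron n A B) (a * b)"
    using has_magic_sum_kron[OF m n A B] .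
  then have "magic_number (m * n) (kron n A B) = magic_number m A * magic_number n B"
    using A B m n by (simp add: magic_number_eq)
  with AB show ?thesis
    by (auto simp: Pan_def)
qed

end
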